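(* Let $H$ and $K$ be finite groups that admit no common nonabelian simple quotient (i.e., there is no nonabelian simple group that is isomorphic to a quotient of $H$ and also to a quotient of $K$). Then $\mathrm{MaxDim}(H \times K) = \mathrm{MaxDim}(H) + \mathrm{MaxDim}(K)$.
   Context: All groups are finite. A finite set $\{H_1,\dots,H_n\}$ of subgroups of a group $G$ is in general position if for every $1 \le j \le n$, $\bigcap_{i \neq j} H_i \supsetneq \bigcap_{i} H_i$. $\mathrm{MaxDim}(G)$ is the largest cardinality of a collection of maximal subgroups of $G$ that is in general position. *)

theory Defs
  imports "HOL-Algebra.Algebra"
begin

definition maximal_subgroup :: "'a set \<Rightarrow> ('a, 'b) monoid_scheme \<Rightarrow> bool" where
  "maximal_subgroup M G \<longleftrightarrow> subgroup M G \<and> M \<noteq> carrier G \<and>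
     (\<forall>N. subgroup N G \<and> M \<subseteq> N \<longrightarrow> N = M \<or> N = carrier G)"

text \<open>Intersections are taken inside the group, so the empty intersection is the whole group.\<close>
definition general_position :: "('a, 'b) monoid_scheme \<Rightarrow> 'a set set \<Rightarrow> bool" where
  "general_position G S \<longleftrightarrow> finite S \<and>
     (\<forall>H\<in>S. carrier G \<inter> \<Inter>S \<subset> carrier G \<inter> \<Inter>(S - {H}))"

definition MaxDim :: "('a, 'b) monoid_scheme \<Rightarrow> nat" where
  "MaxDim G = Max {card S | S. S \<subseteq> {M. maximal_subgroup M G} \<and> general_position G S}"

end

theory Submission
  imports Defs
begin

text \<open>
  A maximal subgroup \<open>L\<close> of \<open>H \<times> K\<close> is either standard, i.e. \<open>M \<times> K\<close> or \<open>H \<times> M\<close> with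
  \<open>M\<close> maximal in a factor, or it projects onto both factors. In the latter case Goursat's lemma
  gives normal subgroups \<open>N\<close> of \<open>H\<close> and \<open>N'\<close> of \<open>K\<close> with \<open>N \<times> N' \<subseteq> L\<close> and
  \<open>H/N \<cong> K/N'\<close>; maximality of \<open>L\<close> makes this quotient simple, so by hypothesis it is abelian,
  and then \<open>N\<close> and \<open>N'\<close> are maximal subgroups. In a family in general position, a non-standard
  member \<open>L\<close> can thus be exchanged for whichever of \<open>N \<times> K\<close>, \<open>H \<times> N'\<close> misses a witness of
  \<open>L\<close>: this normal maximal subgroup times the intersection of the other members is the whole
  group, so the witnesses of the other members can be moved into it. This yields a standard family
  of the same size, which splits into families in general position in \<open>H\<close> and in \<open>K\<close>.
  Conversely, optimal families of the factors lift to a family in general position in \<open>H \<times> K\<close>.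
\<close>

section \<open>MaxDim and general position\<close>

lemma maximal_subgroupD:
  assumes "maximal_subgroup M G"
  shows "subgroup M G" and "M \<noteq> carrier G"
    and "\<And>N. subgroup N G \<Longrightarrow> M \<subseteq> N \<Longrightarrow> N = M \<or> N = carrier G"
  using assms unfolding maximal_subgroup_def by blast+

lemma finite_MaxDim_candidates:
  assumes "finite (carrier G)"
  shows "finite {card S | S. S \<subseteq> {M. maximal_subgroup M G} \<and> general_position G S}"
proof (rule finite_subset)
  have "S \<in> Pow (Pow (carrier G))" if "S \<subseteq> {M. maximal_subgroup M G}" for S
    using that subgroup.subset[OF maximal_subgroupD(1)] by blast
  then show "{card S | S. S \<subseteq> {M. maximal_subgroup M G} \<and> general_position G S}
        \<subseteq> card ` Pow (Pow (carrier G))"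
    by blast
  show "finite (card ` Pow (Pow (carrier G)))" using assms by simp
qed

lemma card_le_MaxDim:
  assumes "finite (carrier G)" "S \<subseteq> {M. maximal_subgroup M G}" "general_position G S"
  shows "card S \<le> MaxDim G"
  unfolding MaxDim_def using assms by (intro Max_ge finite_MaxDim_candidates) auto

lemma MaxDim_attained:
  assumes "finite (carrier G)"
  obtains S where "S \<subseteq> {M. maximal_subgroup M G}" "general_position G S" "card S = MaxDim G"
proof -
  have "general_position G {}" unfolding general_position_def by simp
  then have "card {} \<in> {card S | S. S \<subseteq> {M. maximal_subgroup M G} \<and> general_position G S}"
    by (auto intro!: exI[of _ "{}"])
  then have "{card S | S. S \<subseteq> {M. maximal_subgroup M G} \<and> general_position G S} \<noteq> {}"
    by blast
  then have "MaxDim G \<in> {card S | S. S \<subseteq> {M. maximal_subgroup M G} \<and> general_position G S}"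
    unfolding MaxDim_def using finite_MaxDim_candidates[OF assms] by (rule Max_in[rotated])
  then show ?thesis using that by auto
qed

lemma general_position_iff:
  "general_position G S \<longleftrightarrow> finite S \<and>
     (\<forall>U\<in>S. \<exists>g\<in>carrier G. (\<forall>Y\<in>S - {U}. g \<in> Y) \<and> g \<notin> U)"
proof -
  have "carrier G \<inter> \<Inter>S \<subset> carrier G \<inter> \<Inter>(S - {U}) \<longleftrightarrow>
        (\<exists>g\<in>carrier G. (\<forall>Y\<in>S - {U}. g \<in> Y) \<and> g \<notin> U)" if "U \<in> S" for U
    using that by blast
  then show ?thesis unfolding general_position_def by auto
qed

lemma general_position_subset:
  "general_position G S \<Longrightarrow> T \<subseteq> S \<Longrightarrow> general_position G T"
  unfolding general_position_iff by (meson Diff_mono finite_subset subset_iff subset_refl)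

lemma general_position_vimage:
  assumes gp: "general_position G' ((\<lambda>M. carrier G' \<inter> p -` M) ` S)"
    and inj: "inj_on (\<lambda>M. carrier G' \<inter> p -` M) S"
    and p: "p ` carrier G' \<subseteq> carrier G"
  shows "general_position G S"
  unfolding general_position_iff
proof (intro conjI ballI)
  define f where "f = (\<lambda>M. carrier G' \<inter> p -` M)"
  note gp = gp[folded f_def] and inj = inj[folded f_def]
  show "finite S" using gp finite_image_iff[OF inj] unfolding general_position_def by simp
  have witness: "\<forall>V\<in>f ` S. \<exists>g\<in>carrier G'. (\<forall>Y\<in>f ` S - {V}. g \<in> Y) \<and> g \<notin> V"
    using gp unfolding general_position_iff by (rule conjunct2)
  fix U assume U: "U \<in> S"
  obtain g where g: "g \<in> carrier G'" "g \<notin> f U" and others: "\<forall>Y\<in>f ` S - {f U}. g \<in> Y"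
    using bspec[OF witness imageI[OF U]] by blast
  have "g \<in> f Y" if "Y \<in> S - {U}" for Y
    using others that inj_on_contraD[OF inj, of Y U] U by blast
  then show "\<exists>x\<in>carrier G. (\<forall>Y\<in>S - {U}. x \<in> Y) \<and> x \<notin> U"
    using g p unfolding f_def by blast
qed

lemma (in group) set_mult_eq_carrier_if_normal_maximal:
  assumes Z_normal: "Z \<lhd> G" and Z_max: "maximal_subgroup Z G"
    and R: "subgroup R G" and g: "g \<in> R" "g \<notin> Z"
  shows "Z <#> R = carrier G"
proof -
  have Z_carrier: "Z \<subseteq> carrier G" using Z_normal normal_imp_subgroup subgroup.subset by blast
  have "Z \<subseteq> Z <#> R"
  proof
    fix z assume z: "z \<in> Z"
    then have "z \<otimes> \<one> \<in> Z <#> R" unfolding set_mult_def using subgroup.one_closed[OF R] by blast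
    then show "z \<in> Z <#> R" using z Z_carrier by auto
  qed
  moreover have "g \<in> Z <#> R"
  proof -
    have "\<one> \<otimes> g \<in> Z <#> R"
      unfolding set_mult_def using g subgroup.one_closed[OF normal_imp_subgroup[OF Z_normal]] by blast
    then show ?thesis using g(1) subgroup.subset[OF R] by auto
  qed
  ultimately show ?thesis
    using maximal_subgroupD(3)[OF Z_max mult_norm_subgroup[OF Z_normal R]] g(2) by blast
qed

lemma (in group) witness_factor:
  assumes subgroups: "\<And>U. U \<in> S \<Longrightarrow> subgroup U G" and U: "U \<in> S"
    and w: "\<forall>Y\<in>S - {U}. w \<in> Y" "w \<notin> U"
    and z: "z \<in> carrier G" and r: "r \<in> carrier G" "\<forall>Y\<in>S. r \<in> Y" and w_eq: "w = z \<otimes> r"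
  shows "(\<forall>Y\<in>S - {U}. z \<in> Y) \<and> z \<notin> U"
proof (intro conjI ballI notI)
  have z_eq: "z = w \<otimes> inv r" using w_eq z r by (simp add: m_assoc)
  fix Y assume Y: "Y \<in> S - {U}"
  then have "subgroup Y G" "w \<in> Y" "r \<in> Y" using subgroups w(1) r(2) by blast+
  then show "z \<in> Y" unfolding z_eq by (metis subgroup.m_closed subgroup.m_inv_closed)
next
  assume "z \<in> U"
  then have "w \<in> U" unfolding w_eq using subgroup.m_closed[OF subgroups[OF U]] r(2) U by blast
  then show False using w(2) by blast
qed

lemma general_position_insert_normal_maximal:
  assumes G: "group G" and gp: "general_position G S"
    and subgroups: "\<And>U. U \<in> S \<Longrightarrow> subgroup U G"
    and Z_normal: "Z \<lhd> G" and Z_max: "maximal_subgroup Z G"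
    and g: "g \<in> carrier G" "\<forall>Y\<in>S. g \<in> Y" "g \<notin> Z"
  shows "general_position G (insert Z S)"
proof -
  interpret G: group G by (rule G)
  define Common where "Common = carrier G \<inter> \<Inter>S"
  have "subgroup Common G"
    using G.subgroups_Inter[of "insert (carrier G) S"] G.subgroup_self subgroups
    unfolding Common_def by auto
  moreover have "g \<in> Common" using g unfolding Common_def by blast
  ultimately have Z_Common: "Z <#>\<^bsub>G\<^esub> Common = carrier G"
    using G.set_mult_eq_carrier_if_normal_maximal[OF Z_normal Z_max] g(3) by blast
  have Z_carrier: "Z \<subseteq> carrier G" using Z_normal normal_imp_subgroup subgroup.subset by blast
  show ?thesis unfolding general_position_iff
  proof (intro conjI ballI)
    show "finite (insert Z S)" using gp unfolding general_position_def by simp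
    fix U assume U: "U \<in> insert Z S"
    show "\<exists>x\<in>carrier G. (\<forall>Y\<in>insert Z S - {U}. x \<in> Y) \<and> x \<notin> U"
    proof (cases "U = Z")
      case True
      then show ?thesis using g by blast
    next
      case False
      then have U_S: "U \<in> S" using U by blast
      then obtain w where w: "w \<in> carrier G" "\<forall>Y\<in>S - {U}. w \<in> Y" "w \<notin> U"
        using gp unfolding general_position_iff by blast
      then obtain z r where z: "z \<in> Z" and r: "r \<in> Common" and w_eq: "w = z \<otimes>\<^bsub>G\<^esub> r"
        unfolding Z_Common[symmetric] set_mult_def by blast
      then have "(\<forall>Y\<in>S - {U}. z \<in> Y) \<and> z \<notin> U"
        using G.witness_factor[OF subgroups U_S w(2,3)] Z_carrier unfolding Common_def by blast
      then show ?thesis using z Z_carrier False by blast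
    qed
  qed
qed

section \<open>Maximal subgroups and quotients\<close>

lemma maximal_subgroup_iso_image:
  assumes G: "group G" and G': "group G'" and \<phi>: "\<phi> \<in> iso G G'"
    and M: "maximal_subgroup M G"
  shows "maximal_subgroup (\<phi> ` M) G'"
  unfolding maximal_subgroup_def
proof (intro conjI allI impI)
  note sub = maximal_subgroupD(1)[OF M]
  have inj: "inj_on \<phi> (carrier G)" and onto: "\<phi> ` carrier G = carrier G'"
    using \<phi> unfolding iso_def bij_betw_def by auto
  show "subgroup (\<phi> ` M) G'" by (rule subgroup.iso_subgroup[OF sub G G' \<phi>])
  show "\<phi> ` M \<noteq> carrier G'"
    using maximal_subgroupD(2)[OF M] subgroup.subset[OF sub] inj onto
    by (metis inj_on_image_eq_iff order_refl)
  fix Q assume Q: "subgroup Q G' \<and> \<phi> ` M \<subseteq> Q"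
  let ?\<psi> = "inv_into (carrier G) \<phi>"
  have "subgroup (?\<psi> ` Q) G"
    using Q subgroup.iso_subgroup[OF _ G' G group.iso_set_sym[OF G \<phi>]] by blast
  moreover have "M \<subseteq> ?\<psi> ` Q"
  proof
    fix m assume "m \<in> M"
    then have "m = ?\<psi> (\<phi> m)" and "\<phi> m \<in> Q"
      using inv_into_f_f[OF inj] subgroup.subset[OF sub] Q by auto
    then show "m \<in> ?\<psi> ` Q" by blast
  qed
  ultimately have "?\<psi> ` Q = M \<or> ?\<psi> ` Q = carrier G" by (rule maximal_subgroupD(3)[OF M])
  moreover have "\<phi> ` ?\<psi> ` Q = Q"
    using Q subgroup.subset onto by (metis image_inv_into_cancel)
  ultimately show "Q = \<phi> ` M \<or> Q = carrier G'" using onto by auto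
qed

lemma (in normal) simple_group_FactGroup:
  assumes fin: "finite (carrier G)" and proper: "H \<noteq> carrier G"
    and max: "\<And>A. A \<lhd> G \<Longrightarrow> H \<subseteq> A \<Longrightarrow> A = H \<or> A = carrier G"
  shows "simple_group (G Mod H)"
  unfolding simple_group_def simple_group_axioms_def
proof (intro conjI allI impI factorgroup_is_group)
  obtain g where g: "g \<in> carrier G" "g \<notin> H" using proper subset by blast
  have "H \<in> carrier (G Mod H)" "H #> g \<in> carrier (G Mod H)"
    unfolding carrier_FactGroup using coset_mult_one[OF subset] g(1) one_closed
    by (metis image_eqI)+
  moreover have "finite (carrier (G Mod H))" using fin by (simp add: carrier_FactGroup)
  ultimately have "card {H, H #> g} \<le> card (carrier (G Mod H))" by (simp add: card_mono)
  moreover have "H #> g \<noteq> H" using rcos_self[OF g(1) subgroup_axioms] g(2) by blast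
  ultimately show "1 < order (G Mod H)" unfolding order_def by simp
next
  fix W assume W: "W \<lhd> G Mod H"
  have sub_W: "subgroup W (G Mod H)" using W normal_imp_subgroup by blast
  have "H \<in> W" using subgroup.one_closed[OF sub_W] by simp
  then have "\<Union>W = H \<or> \<Union>W = carrier G"
    using max[OF factgroup_subgroup_union_normal[OF W]] by blast
  moreover have W_eq: "W = rcosets\<^bsub>G\<lparr>carrier := \<Union>W\<rparr>\<^esub> H"
    by (rule factgroup_subgroup_union_factor[OF sub_W])
  moreover have rcosets_eq: "rcosets\<^bsub>G\<lparr>carrier := C\<rparr>\<^esub> H = (\<lambda>a. H #> a) ` C" for C
    unfolding RCOSETS_def by (auto simp: r_coset_def)
  ultimately show "W = carrier (G Mod H) \<or> W = {\<one>\<^bsub>G Mod H\<^esub>}"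
  proof (elim disjE)
    assume U: "\<Union>W = H"
    have "(\<lambda>a. H #> a) ` H = (\<lambda>a. H) ` H"
      using coset_join2[OF subsetD[OF subset] subgroup_axioms] by (rule image_cong[OF refl])
    also have "\<dots> = {H}" by (rule image_constant[OF subgroup.one_closed[OF subgroup_axioms]])
    finally have "W = {H}" using W_eq[unfolded U rcosets_eq] by simp
    then show ?thesis by simp
  next
    assume U: "\<Union>W = carrier G"
    show ?thesis using W_eq[unfolded U rcosets_eq] by (simp add: carrier_FactGroup)
  qed
qed

lemma (in normal) normal_if_comm_FactGroup:
  assumes comm: "comm_group (G Mod H)" and Q: "subgroup Q G" and H_Q: "H \<subseteq> Q"
  shows "Q \<lhd> G"
  unfolding normal_inv_iff
proof (intro conjI ballI Q)
  interpret quotient: comm_group "G Mod H" by (rule comm)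
  fix x q assume x: "x \<in> carrier G" and q: "q \<in> Q"
  then have q_carrier: "q \<in> carrier G" using subgroup.subset[OF Q] by blast
  have "H #> (x \<otimes> q) = H #> (q \<otimes> x)"
    using quotient.m_comm[of "H #> x" "H #> q"] rcos_sum x q_carrier rcosetsI[OF subset]
    by (simp add: carrier_FactGroup)
  then have "x \<otimes> q \<otimes> inv (q \<otimes> x) \<in> Q"
    using rcos_module_imp[OF is_group, of "q \<otimes> x" "x \<otimes> q"] rcos_self[OF _ subgroup_axioms]
      x q_carrier H_Q
    by (metis m_closed subsetD)
  then have "x \<otimes> q \<otimes> inv (q \<otimes> x) \<otimes> q \<in> Q" using subgroup.m_closed[OF Q _ q] by blast
  moreover have "x \<otimes> q \<otimes> inv (q \<otimes> x) \<otimes> q = x \<otimes> q \<otimes> inv x"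
    using x q_carrier by (simp add: inv_mult_group m_assoc)
  ultimately show "x \<otimes> q \<otimes> inv x \<in> Q" by simp
qed

lemma (in normal) maximal_subgroup_if_comm_FactGroup:
  assumes comm: "comm_group (G Mod H)" and proper: "H \<noteq> carrier G"
    and max: "\<And>A. A \<lhd> G \<Longrightarrow> H \<subseteq> A \<Longrightarrow> A = H \<or> A = carrier G"
  shows "maximal_subgroup H G"
  unfolding maximal_subgroup_def
  using subgroup_axioms proper max normal_if_comm_FactGroup[OF comm] by blast

section \<open>Maximal subgroups of direct products\<close>

lemma swap_iso: "prod.swap \<in> iso (H \<times>\<times> K) (K \<times>\<times> H)"
proof -
  have "(\<lambda>(x, y). (y, x)) = prod.swap" by auto
  then show ?thesis using DirProd_commute_iso_set by metis
qed

lemma maximal_subgroup_swap: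
  assumes "group H" "group K" "maximal_subgroup L (H \<times>\<times> K)"
  shows "maximal_subgroup (prod.swap ` L) (K \<times>\<times> H)"
  using maximal_subgroup_iso_image[OF DirProd_group DirProd_group swap_iso] assms by blast

lemma subgroup_fst_image:
  assumes "group H" "group K" "subgroup L (H \<times>\<times> K)"
  shows "subgroup (fst ` L) H"
proof -
  have "group_hom (H \<times>\<times> K) H fst"
    using assms by (auto simp: group_hom_def group_hom_axioms_def hom_def intro: DirProd_group)
  then show ?thesis using assms(3) by (rule group_hom.subgroup_img_is_subgroup)
qed

lemma subgroup_eq_Times_carrier:
  assumes H: "group H" and K: "group K" and Q: "subgroup Q (H \<times>\<times> K)"
    and fibre: "{\<one>\<^bsub>H\<^esub>} \<times> carrier K \<subseteq> Q"
  shows "Q = fst ` Q \<times> carrier K"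
proof
  interpret H: group H by (rule H)
  interpret K: group K by (rule K)
  show "Q \<subseteq> fst ` Q \<times> carrier K" using subgroup.subset[OF Q] by force
  show "fst ` Q \<times> carrier K \<subseteq> Q"
  proof
    fix x assume "x \<in> fst ` Q \<times> carrier K"
    then obtain h k k0 where x: "x = (h, k)" and k: "k \<in> carrier K" and hk0: "(h, k0) \<in> Q"
      by force
    then have h: "h \<in> carrier H" and k0: "k0 \<in> carrier K" using subgroup.subset[OF Q] by auto
    have "(\<one>\<^bsub>H\<^esub>, inv\<^bsub>K\<^esub> k0 \<otimes>\<^bsub>K\<^esub> k) \<in> Q" using fibre k k0 by auto
    from subgroup.m_closed[OF Q hk0 this]
    show "x \<in> Q" using x h k k0 by (simp add: K.m_assoc[symmetric])
  qed
qed

lemma maximal_subgroup_Times_carrier: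
  assumes H: "group H" and K: "group K" and max: "maximal_subgroup M H"
  shows "maximal_subgroup (M \<times> carrier K) (H \<times>\<times> K)"
  unfolding maximal_subgroup_def
proof (intro conjI allI impI)
  have one_K: "\<one>\<^bsub>K\<^esub> \<in> carrier K" using K by (simp add: group.is_monoid)
  note sub = maximal_subgroupD(1)[OF max]
  show "subgroup (M \<times> carrier K) (H \<times>\<times> K)"
    by (rule DirProd_subgroups[OF H sub K group.subgroup_self[OF K]])
  show "M \<times> carrier K \<noteq> carrier (H \<times>\<times> K)"
    using maximal_subgroupD(2)[OF max] Times_eq_cancel2[OF one_K, of M "carrier H"] by simp
  fix Q assume Q: "subgroup Q (H \<times>\<times> K) \<and> M \<times> carrier K \<subseteq> Q"
  then have "{\<one>\<^bsub>H\<^esub>} \<times> carrier K \<subseteq> Q" using subgroup.one_closed[OF sub] by blast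
  then have Q_eq: "Q = fst ` Q \<times> carrier K" using subgroup_eq_Times_carrier[OF H K] Q by blast
  have "M \<subseteq> fst ` Q" using Q one_K by force
  then have "fst ` Q = M \<or> fst ` Q = carrier H"
    using maximal_subgroupD(3)[OF max] subgroup_fst_image[OF H K] Q by blast
  then show "Q = M \<times> carrier K \<or> Q = carrier (H \<times>\<times> K)" using Q_eq by auto
qed

lemma maximal_subgroup_Times_carrierD:
  assumes H: "group H" and K: "group K" and max: "maximal_subgroup (M \<times> carrier K) (H \<times>\<times> K)"
  shows "maximal_subgroup M H"
  unfolding maximal_subgroup_def
proof (intro conjI allI impI)
  have one_K: "\<one>\<^bsub>K\<^esub> \<in> carrier K" using K by (simp add: group.is_monoid)
  have "fst ` (M \<times> carrier K) = M" using one_K by auto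
  then show "subgroup M H" using subgroup_fst_image[OF H K maximal_subgroupD(1)[OF max]] by simp
  show "M \<noteq> carrier H" using maximal_subgroupD(2)[OF max] by auto
  fix Q assume Q: "subgroup Q H \<and> M \<subseteq> Q"
  then have "subgroup (Q \<times> carrier K) (H \<times>\<times> K)"
    using DirProd_subgroups[OF H _ K group.subgroup_self[OF K]] by blast
  then have "Q \<times> carrier K = M \<times> carrier K \<or> Q \<times> carrier K = carrier (H \<times>\<times> K)"
    using maximal_subgroupD(3)[OF max] Q by blast
  then show "Q = M \<or> Q = carrier H" using Times_eq_cancel2[OF one_K] by (metis carrier_DirProd)
qed

lemma maximal_subgroup_Times_carrier_iff:
  "group H \<Longrightarrow> group K \<Longrightarrow>
    maximal_subgroup (M \<times> carrier K) (H \<times>\<times> K) \<longleftrightarrow> maximal_subgroup M H"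
  using maximal_subgroup_Times_carrier maximal_subgroup_Times_carrierD by blast

lemma maximal_subgroup_carrier_Times_iff:
  assumes H: "group H" and K: "group K"
  shows "maximal_subgroup (carrier H \<times> M) (H \<times>\<times> K) \<longleftrightarrow> maximal_subgroup M K"
proof -
  have swap_eq: "prod.swap ` (M \<times> carrier H) = carrier H \<times> M"
    and swap_eq': "prod.swap ` (carrier H \<times> M) = M \<times> carrier H"
    by (simp_all add: product_swap)
  have "maximal_subgroup (carrier H \<times> M) (H \<times>\<times> K) \<longleftrightarrow>
        maximal_subgroup (M \<times> carrier H) (K \<times>\<times> H)"
    using maximal_subgroup_swap[OF H K, of "carrier H \<times> M"]
      maximal_subgroup_swap[OF K H, of "M \<times> carrier H"]
    unfolding swap_eq swap_eq' by blast
  also have "\<dots> \<longleftrightarrow> maximal_subgroup M K" by (rule maximal_subgroup_Times_carrier_iff[OF K H])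
  finally show ?thesis .
qed

lemma maximal_subgroup_DirProd_fst_proper:
  assumes H: "group H" and K: "group K" and max: "maximal_subgroup L (H \<times>\<times> K)"
    and proper: "fst ` L \<noteq> carrier H"
  shows "L = fst ` L \<times> carrier K"
proof -
  note sub = maximal_subgroupD(1)[OF max]
  have one_K: "\<one>\<^bsub>K\<^esub> \<in> carrier K" using K by (simp add: group.is_monoid)
  have "subgroup (fst ` L \<times> carrier K) (H \<times>\<times> K)"
    by (rule DirProd_subgroups[OF H subgroup_fst_image[OF H K sub] K group.subgroup_self[OF K]])
  moreover have "L \<subseteq> fst ` L \<times> carrier K" using subgroup.subset[OF sub] by force
  moreover have "fst ` L \<times> carrier K \<noteq> carrier (H \<times>\<times> K)"
    using proper Times_eq_cancel2[OF one_K, of "fst ` L" "carrier H"] by simp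
  ultimately show ?thesis using maximal_subgroupD(3)[OF max] by blast
qed

lemma maximal_subgroup_DirProd_snd_proper:
  assumes H: "group H" and K: "group K" and max: "maximal_subgroup L (H \<times>\<times> K)"
    and proper: "snd ` L \<noteq> carrier K"
  shows "L = carrier H \<times> snd ` L"
proof -
  have "fst ` prod.swap ` L = snd ` L" by (simp add: image_image)
  then have "prod.swap ` L = snd ` L \<times> carrier H"
    using maximal_subgroup_DirProd_fst_proper[OF K H maximal_subgroup_swap[OF H K max]] proper
    by simp
  then have "prod.swap ` prod.swap ` L = carrier H \<times> snd ` L" by (simp add: product_swap)
  then show ?thesis by (simp add: image_image)
qed

definition standard_maximal ::
    "('a, 'c) monoid_scheme \<Rightarrow> ('b, 'd) monoid_scheme \<Rightarrow> ('a \<times> 'b) set \<Rightarrow> bool" where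
  "standard_maximal H K U \<longleftrightarrow>
     (\<exists>M. maximal_subgroup M H \<and> U = M \<times> carrier K) \<or>
     (\<exists>M. maximal_subgroup M K \<and> U = carrier H \<times> M)"

lemma standard_maximal_imp_maximal_subgroup:
  "group H \<Longrightarrow> group K \<Longrightarrow> standard_maximal H K U \<Longrightarrow> maximal_subgroup U (H \<times>\<times> K)"
  unfolding standard_maximal_def
  using maximal_subgroup_Times_carrier_iff maximal_subgroup_carrier_Times_iff by blast

lemma maximal_subgroup_DirProd_cases:
  assumes H: "group H" and K: "group K" and max: "maximal_subgroup L (H \<times>\<times> K)"
  shows "standard_maximal H K L \<or> fst ` L = carrier H \<and> snd ` L = carrier K"
proof -
  have "standard_maximal H K L" if "fst ` L \<noteq> carrier H"
    using maximal_subgroup_DirProd_fst_proper[OF assms that]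
      maximal_subgroup_Times_carrier_iff[OF H K, of "fst ` L"] max
    unfolding standard_maximal_def by metis
  moreover have "standard_maximal H K L" if "snd ` L \<noteq> carrier K"
    using maximal_subgroup_DirProd_snd_proper[OF assms that]
      maximal_subgroup_carrier_Times_iff[OF H K, of "snd ` L"] max
    unfolding standard_maximal_def by metis
  ultimately show ?thesis by blast
qed

lemma general_position_Times_carrier:
  assumes K: "carrier K \<noteq> {}" and S: "\<forall>M\<in>S. M \<subseteq> carrier H"
    and gp: "general_position (H \<times>\<times> K) ((\<lambda>M. M \<times> carrier K) ` S)"
  shows "general_position H S"
proof (rule general_position_vimage[where G' = "H \<times>\<times> K" and p = fst])
  have eq: "M \<times> carrier K = carrier (H \<times>\<times> K) \<inter> fst -` M" if "M \<in> S" for M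
    using that S K by auto
  show "general_position (H \<times>\<times> K) ((\<lambda>M. carrier (H \<times>\<times> K) \<inter> fst -` M) ` S)"
    using gp eq by (simp cong: image_cong)
  show "inj_on (\<lambda>M. carrier (H \<times>\<times> K) \<inter> fst -` M) S"
  proof (rule inj_onI)
    fix M1 M2 assume "M1 \<in> S" "M2 \<in> S"
      and "carrier (H \<times>\<times> K) \<inter> fst -` M1 = carrier (H \<times>\<times> K) \<inter> fst -` M2"
    then have "M1 \<times> carrier K = M2 \<times> carrier K" using eq by simp
    then show "M1 = M2" using K by (auto simp: times_eq_iff)
  qed
  show "fst ` carrier (H \<times>\<times> K) \<subseteq> carrier H" by auto
qed

lemma general_position_carrier_Times:
  assumes H: "carrier H \<noteq> {}" and S: "\<forall>M\<in>S. M \<subseteq> carrier K"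
    and gp: "general_position (H \<times>\<times> K) ((\<lambda>M. carrier H \<times> M) ` S)"
  shows "general_position K S"
proof (rule general_position_vimage[where G' = "H \<times>\<times> K" and p = snd])
  have eq: "carrier H \<times> M = carrier (H \<times>\<times> K) \<inter> snd -` M" if "M \<in> S" for M
    using that S H by auto
  show "general_position (H \<times>\<times> K) ((\<lambda>M. carrier (H \<times>\<times> K) \<inter> snd -` M) ` S)"
    using gp eq by (simp cong: image_cong)
  show "inj_on (\<lambda>M. carrier (H \<times>\<times> K) \<inter> snd -` M) S"
  proof (rule inj_onI)
    fix M1 M2 assume "M1 \<in> S" "M2 \<in> S"
      and "carrier (H \<times>\<times> K) \<inter> snd -` M1 = carrier (H \<times>\<times> K) \<inter> snd -` M2"
    then have "carrier H \<times> M1 = carrier H \<times> M2" using eq by simp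
    then show "M1 = M2" using H by (auto simp: times_eq_iff)
  qed
  show "snd ` carrier (H \<times>\<times> K) \<subseteq> carrier K" by auto
qed

lemma general_position_DirProd_Un:
  assumes gp1: "general_position H S1" and gp2: "general_position K S2"
    and one1: "\<And>M. M \<in> S1 \<Longrightarrow> \<one>\<^bsub>H\<^esub> \<in> M" and one2: "\<And>M. M \<in> S2 \<Longrightarrow> \<one>\<^bsub>K\<^esub> \<in> M"
    and H: "\<one>\<^bsub>H\<^esub> \<in> carrier H" and K: "\<one>\<^bsub>K\<^esub> \<in> carrier K"
  shows "general_position (H \<times>\<times> K) ((\<lambda>M. M \<times> carrier K) ` S1 \<union> (\<lambda>M. carrier H \<times> M) ` S2)"
    (is "general_position _ (?T1 \<union> ?T2)")
  unfolding general_position_iff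
proof (intro conjI ballI)
  show "finite (?T1 \<union> ?T2)" using gp1 gp2 unfolding general_position_def by simp
  fix U assume "U \<in> ?T1 \<union> ?T2"
  then consider (left) M where "M \<in> S1" "U = M \<times> carrier K"
    | (right) M where "M \<in> S2" "U = carrier H \<times> M"
    by blast
  then show "\<exists>g\<in>carrier (H \<times>\<times> K). (\<forall>Y\<in>?T1 \<union> ?T2 - {U}. g \<in> Y) \<and> g \<notin> U"
  proof cases
    case left
    obtain h where h: "h \<in> carrier H" "\<forall>Y\<in>S1 - {M}. h \<in> Y" "h \<notin> M"
      using gp1 left(1) unfolding general_position_iff by blast
    have "(h, \<one>\<^bsub>K\<^esub>) \<in> Y" if "Y \<in> ?T1 \<union> ?T2 - {U}" for Y
      using that h(1,2) left(2) one2 K by auto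
    then show ?thesis using h(1,3) left(2) K by (intro bexI[of _ "(h, \<one>\<^bsub>K\<^esub>)"]) auto
  next
    case right
    obtain k where k: "k \<in> carrier K" "\<forall>Y\<in>S2 - {M}. k \<in> Y" "k \<notin> M"
      using gp2 right(1) unfolding general_position_iff by blast
    have "(\<one>\<^bsub>H\<^esub>, k) \<in> Y" if "Y \<in> ?T1 \<union> ?T2 - {U}" for Y
      using that k(1,2) right(2) one1 H by auto
    then show ?thesis using k(1,3) right(2) H by (intro bexI[of _ "(\<one>\<^bsub>H\<^esub>, k)"]) auto
  qed
qed

section \<open>Goursat's lemma for maximal subdirect products\<close>

definition fst_kernel :: "('b, 'd) monoid_scheme \<Rightarrow> ('a \<times> 'b) set \<Rightarrow> 'a set" where
  "fst_kernel K L = {h. (h, \<one>\<^bsub>K\<^esub>) \<in> L}"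

definition snd_kernel :: "('a, 'c) monoid_scheme \<Rightarrow> ('a \<times> 'b) set \<Rightarrow> 'b set" where
  "snd_kernel H L = {k. (\<one>\<^bsub>H\<^esub>, k) \<in> L}"

lemma snd_kernel_eq_fst_kernel_swap: "snd_kernel H L = fst_kernel H (prod.swap ` L)"
  unfolding fst_kernel_def snd_kernel_def by force

locale subdirect_product = H?: group H + K?: group K
  for H :: "('a, 'c) monoid_scheme" and K :: "('b, 'd) monoid_scheme" +
  fixes L :: "('a \<times> 'b) set"
  assumes subgroup_L: "subgroup L (H \<times>\<times> K)"
    and fst_L: "fst ` L = carrier H" and snd_L: "snd ` L = carrier K"
begin

lemma mem_L_carrier: "(h, k) \<in> L \<Longrightarrow> h \<in> carrier H \<and> k \<in> carrier K"
  using subgroup.subset[OF subgroup_L] by auto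

lemma mult_mem_L: "(a, b) \<in> L \<Longrightarrow> (c, d) \<in> L \<Longrightarrow> (a \<otimes>\<^bsub>H\<^esub> c, b \<otimes>\<^bsub>K\<^esub> d) \<in> L"
  using subgroup.m_closed[OF subgroup_L, of "(a, b)" "(c, d)"] by simp

lemma inv_mem_L: "(a, b) \<in> L \<Longrightarrow> (inv\<^bsub>H\<^esub> a, inv\<^bsub>K\<^esub> b) \<in> L"
  using subgroup.m_inv_closed[OF subgroup_L, of "(a, b)"] mem_L_carrier[of a b]
    inv_DirProd[OF H.group_axioms K.group_axioms]
  by simp

lemma one_mem_L: "(\<one>\<^bsub>H\<^esub>, \<one>\<^bsub>K\<^esub>) \<in> L"
  using subgroup.one_closed[OF subgroup_L] by simp

lemma exists_snd: "h \<in> carrier H \<Longrightarrow> \<exists>k. (h, k) \<in> L"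
  using fst_L by force

lemma exists_fst: "k \<in> carrier K \<Longrightarrow> \<exists>h. (h, k) \<in> L"
  using snd_L by force

lemma subdirect_swap: "subdirect_product K H (prod.swap ` L)"
proof (intro subdirect_product.intro subdirect_product_axioms.intro)
  show "group K" "group H" by (rule K.group_axioms H.group_axioms)+
  show "subgroup (prod.swap ` L) (K \<times>\<times> H)"
    using swap_iso subgroup.iso_subgroup[OF subgroup_L] DirProd_group H.group_axioms K.group_axioms
    by metis
  show "fst ` prod.swap ` L = carrier K" "snd ` prod.swap ` L = carrier H"
    using fst_L snd_L by (simp_all add: image_image)
qed

lemma fst_kernel_subset: "fst_kernel K L \<subseteq> carrier H"
  unfolding fst_kernel_def using mem_L_carrier by blast

lemma fst_kernel_normal: "fst_kernel K L \<lhd> H"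
  unfolding H.normal_inv_iff
proof (intro conjI ballI)
  show "subgroup (fst_kernel K L) H"
  proof (rule H.subgroupI)
    show "fst_kernel K L \<subseteq> carrier H" by (rule fst_kernel_subset)
    show "fst_kernel K L \<noteq> {}" unfolding fst_kernel_def using one_mem_L by blast
  next
    fix a b assume "a \<in> fst_kernel K L" "b \<in> fst_kernel K L"
    then show "inv\<^bsub>H\<^esub> a \<in> fst_kernel K L" "a \<otimes>\<^bsub>H\<^esub> b \<in> fst_kernel K L"
      unfolding fst_kernel_def using inv_mem_L mult_mem_L by fastforce+
  qed
  fix x n assume x: "x \<in> carrier H" and n: "n \<in> fst_kernel K L"
  obtain k where k: "(x, k) \<in> L" using exists_snd[OF x] by blast
  have "(x \<otimes>\<^bsub>H\<^esub> n \<otimes>\<^bsub>H\<^esub> inv\<^bsub>H\<^esub> x, k \<otimes>\<^bsub>K\<^esub> \<one>\<^bsub>K\<^esub> \<otimes>\<^bsub>K\<^esub> inv\<^bsub>K\<^esub> k) \<in> L"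
    using n unfolding fst_kernel_def by (intro mult_mem_L inv_mem_L k) simp
  then show "x \<otimes>\<^bsub>H\<^esub> n \<otimes>\<^bsub>H\<^esub> inv\<^bsub>H\<^esub> x \<in> fst_kernel K L"
    unfolding fst_kernel_def using mem_L_carrier[OF k] by simp
qed

lemma snd_kernel_normal: "snd_kernel H L \<lhd> K"
  using subdirect_product.fst_kernel_normal[OF subdirect_swap] by (simp add: snd_kernel_eq_fst_kernel_swap)

lemma kernels_Times_subset: "fst_kernel K L \<times> snd_kernel H L \<subseteq> L"
  unfolding fst_kernel_def snd_kernel_def
proof (clarify)
  fix h k assume h: "(h, \<one>\<^bsub>K\<^esub>) \<in> L" and k: "(\<one>\<^bsub>H\<^esub>, k) \<in> L"
  from mult_mem_L[OF h k] show "(h, k) \<in> L" using mem_L_carrier h k by simp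
qed

lemma subgroup_mult_fst_normal:
  assumes A: "A \<lhd> H"
  shows "subgroup {(a \<otimes>\<^bsub>H\<^esub> h, k) | a h k. a \<in> A \<and> (h, k) \<in> L} (H \<times>\<times> K)"
proof -
  interpret G: group "H \<times>\<times> K" by (rule DirProd_group[OF H.group_axioms K.group_axioms])
  have "{(a \<otimes>\<^bsub>H\<^esub> h, k) | a h k. a \<in> A \<and> (h, k) \<in> L} = (A \<times> {\<one>\<^bsub>K\<^esub>}) <#>\<^bsub>H \<times>\<times> K\<^esub> L"
  proof (intro equalityI subsetI)
    fix x assume "x \<in> {(a \<otimes>\<^bsub>H\<^esub> h, k) | a h k. a \<in> A \<and> (h, k) \<in> L}"
    then obtain a h k where a: "a \<in> A" and hk: "(h, k) \<in> L" and x: "x = (a \<otimes>\<^bsub>H\<^esub> h, k)"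
      by blast
    then have "x = (a, \<one>\<^bsub>K\<^esub>) \<otimes>\<^bsub>H \<times>\<times> K\<^esub> (h, k)" using mem_L_carrier by simp
    then show "x \<in> (A \<times> {\<one>\<^bsub>K\<^esub>}) <#>\<^bsub>H \<times>\<times> K\<^esub> L" unfolding set_mult_def using a hk by blast
  next
    fix x assume "x \<in> (A \<times> {\<one>\<^bsub>K\<^esub>}) <#>\<^bsub>H \<times>\<times> K\<^esub> L"
    then obtain a h k where "a \<in> A" "(h, k) \<in> L" "x = (a, \<one>\<^bsub>K\<^esub>) \<otimes>\<^bsub>H \<times>\<times> K\<^esub> (h, k)"
      unfolding set_mult_def by auto
    then show "x \<in> {(a \<otimes>\<^bsub>H\<^esub> h, k) | a h k. a \<in> A \<and> (h, k) \<in> L}"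
      using mem_L_carrier by auto
  qed
  also have "subgroup \<dots> (H \<times>\<times> K)"
    by (intro G.mult_norm_subgroup subgroup_L H.DirProd_normal K.group_axioms A K.one_is_normal)
  finally show ?thesis .
qed

definition coset_map :: "'a \<Rightarrow> 'b set" where
  "coset_map h = snd_kernel H L #>\<^bsub>K\<^esub> (SOME k. (h, k) \<in> L)"

lemma coset_map_eq: "(h, k) \<in> L \<Longrightarrow> coset_map h = snd_kernel H L #>\<^bsub>K\<^esub> k"
proof -
  interpret N: normal "snd_kernel H L" K by (rule snd_kernel_normal)
  assume hk: "(h, k) \<in> L"
  define k' where "k' = (SOME k. (h, k) \<in> L)"
  have hk': "(h, k') \<in> L" unfolding k'_def using hk by (rule someI)
  have "(h \<otimes>\<^bsub>H\<^esub> inv\<^bsub>H\<^esub> h, k' \<otimes>\<^bsub>K\<^esub> inv\<^bsub>K\<^esub> k) \<in> L" by (intro mult_mem_L inv_mem_L hk hk')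
  then have "k' \<otimes>\<^bsub>K\<^esub> inv\<^bsub>K\<^esub> k \<in> snd_kernel H L"
    unfolding snd_kernel_def using mem_L_carrier[OF hk] by simp
  then have "k' \<in> snd_kernel H L #>\<^bsub>K\<^esub> k"
    using N.rcos_module_rev[OF K.group_axioms] mem_L_carrier hk hk' by blast
  then show ?thesis
    unfolding coset_map_def k'_def[symmetric]
    using K.repr_independence[OF _ _ N.subgroup_axioms] mem_L_carrier[OF hk] by blast
qed

lemma coset_map_hom: "coset_map \<in> hom H (K Mod snd_kernel H L)"
proof (rule homI)
  interpret N: normal "snd_kernel H L" K by (rule snd_kernel_normal)
  fix h assume "h \<in> carrier H"
  then obtain k where hk: "(h, k) \<in> L" using exists_snd by blast
  then show "coset_map h \<in> carrier (K Mod snd_kernel H L)"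
    using coset_map_eq mem_L_carrier K.rcosetsI[OF N.subset] by (simp add: carrier_FactGroup)
next
  interpret N: normal "snd_kernel H L" K by (rule snd_kernel_normal)
  fix h1 h2 assume "h1 \<in> carrier H" "h2 \<in> carrier H"
  then obtain k1 k2 where hk1: "(h1, k1) \<in> L" and hk2: "(h2, k2) \<in> L" using exists_snd by blast
  then have "coset_map (h1 \<otimes>\<^bsub>H\<^esub> h2) = snd_kernel H L #>\<^bsub>K\<^esub> (k1 \<otimes>\<^bsub>K\<^esub> k2)"
    using coset_map_eq mult_mem_L by blast
  also have "\<dots> = coset_map h1 \<otimes>\<^bsub>K Mod snd_kernel H L\<^esub> coset_map h2"
    using coset_map_eq[OF hk1] coset_map_eq[OF hk2] N.rcos_sum mem_L_carrier hk1 hk2 by simp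
  finally show "coset_map (h1 \<otimes>\<^bsub>H\<^esub> h2) = coset_map h1 \<otimes>\<^bsub>K Mod snd_kernel H L\<^esub> coset_map h2" .
qed

lemma kernel_coset_map: "kernel H (K Mod snd_kernel H L) coset_map = fst_kernel K L"
proof (intro equalityI subsetI)
  interpret N: normal "snd_kernel H L" K by (rule snd_kernel_normal)
  fix h assume "h \<in> kernel H (K Mod snd_kernel H L) coset_map"
  then have h: "h \<in> carrier H" and "coset_map h = snd_kernel H L" by (simp_all add: kernel_def)
  obtain k where hk: "(h, k) \<in> L" using exists_snd[OF h] by blast
  then have "k \<in> snd_kernel H L"
    using coset_map_eq \<open>coset_map h = snd_kernel H L\<close> K.coset_join1[OF _ _ N.subgroup_axioms]
      mem_L_carrier
    by metis
  then have "(h \<otimes>\<^bsub>H\<^esub> inv\<^bsub>H\<^esub> \<one>\<^bsub>H\<^esub>, k \<otimes>\<^bsub>K\<^esub> inv\<^bsub>K\<^esub> k) \<in> L"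
    unfolding snd_kernel_def by (intro mult_mem_L inv_mem_L hk) simp
  then show "h \<in> fst_kernel K L" unfolding fst_kernel_def using h mem_L_carrier[OF hk] by simp
next
  interpret N: normal "snd_kernel H L" K by (rule snd_kernel_normal)
  fix h assume "h \<in> fst_kernel K L"
  then have h1: "(h, \<one>\<^bsub>K\<^esub>) \<in> L" and h: "h \<in> carrier H"
    unfolding fst_kernel_def using mem_L_carrier by auto
  have "coset_map h = snd_kernel H L"
    using coset_map_eq[OF h1] K.coset_mult_one[OF N.subset] by simp
  then show "h \<in> kernel H (K Mod snd_kernel H L) coset_map" using h by (simp add: kernel_def)
qed

lemma coset_map_onto: "coset_map ` carrier H = carrier (K Mod snd_kernel H L)"
proof
  show "coset_map ` carrier H \<subseteq> carrier (K Mod snd_kernel H L)"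
    using coset_map_hom by (simp add: hom_def Pi_def image_subset_iff)
  show "carrier (K Mod snd_kernel H L) \<subseteq> coset_map ` carrier H"
  proof
    fix C assume "C \<in> carrier (K Mod snd_kernel H L)"
    then obtain k where k: "k \<in> carrier K" and C: "C = snd_kernel H L #>\<^bsub>K\<^esub> k"
      by (auto simp: carrier_FactGroup)
    obtain h where hk: "(h, k) \<in> L" using exists_fst[OF k] by blast
    then show "C \<in> coset_map ` carrier H" using coset_map_eq[OF hk] C mem_L_carrier by blast
  qed
qed

theorem FactGroup_kernels_iso: "H Mod fst_kernel K L \<cong> K Mod snd_kernel H L"
proof -
  interpret N: normal "snd_kernel H L" K by (rule snd_kernel_normal)
  interpret coset_map: group_hom H "K Mod snd_kernel H L" coset_map
    by (intro group_hom.intro group_hom_axioms.intro H.group_axioms N.factorgroup_is_group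
        coset_map_hom)
  show ?thesis using coset_map.FactGroup_iso[OF coset_map_onto] by (simp add: kernel_coset_map)
qed

end

locale maximal_subdirect_product = subdirect_product +
  assumes maximal_L: "maximal_subgroup L (H \<times>\<times> K)"
begin

lemma maximal_subdirect_swap: "maximal_subdirect_product K H (prod.swap ` L)"
  using subdirect_swap maximal_subgroup_swap[OF H.group_axioms K.group_axioms maximal_L]
  by (simp add: maximal_subdirect_product_def maximal_subdirect_product_axioms_def)

lemma fst_kernel_proper: "fst_kernel K L \<noteq> carrier H"
proof
  assume full: "fst_kernel K L = carrier H"
  have "carrier (H \<times>\<times> K) \<subseteq> L"
  proof (clarsimp)
    fix h k assume h: "h \<in> carrier H" and k: "k \<in> carrier K"
    obtain h0 where hk0: "(h0, k) \<in> L" using exists_fst[OF k] by blast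
    then have h0: "h0 \<in> carrier H" using mem_L_carrier by blast
    then have "(h \<otimes>\<^bsub>H\<^esub> inv\<^bsub>H\<^esub> h0, \<one>\<^bsub>K\<^esub>) \<in> L"
      using full h unfolding fst_kernel_def by blast
    from mult_mem_L[OF this hk0] show "(h, k) \<in> L" using h h0 k by (simp add: H.m_assoc)
  qed
  then show False
    using maximal_subgroupD(2)[OF maximal_L] subgroup.subset[OF subgroup_L] by blast
qed

lemma fst_kernel_maximal_normal:
  assumes A: "A \<lhd> H" and kernel_A: "fst_kernel K L \<subseteq> A"
  shows "A = fst_kernel K L \<or> A = carrier H"
proof -
  have A_sub: "A \<subseteq> carrier H" using A normal_imp_subgroup subgroup.subset by blast
  define T where "T = {(a \<otimes>\<^bsub>H\<^esub> h, k) | a h k. a \<in> A \<and> (h, k) \<in> L}"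
  have "L \<subseteq> T"
  proof (clarify)
    fix h k assume hk: "(h, k) \<in> L"
    have "\<one>\<^bsub>H\<^esub> \<in> A" using normal_imp_subgroup[OF A] subgroup.one_closed by blast
    moreover have "(h, k) = (\<one>\<^bsub>H\<^esub> \<otimes>\<^bsub>H\<^esub> h, k)" using mem_L_carrier[OF hk] by simp
    ultimately show "(h, k) \<in> T" unfolding T_def using hk by blast
  qed
  then have "T = L \<or> T = carrier (H \<times>\<times> K)"
    using maximal_subgroupD(3)[OF maximal_L] subgroup_mult_fst_normal[OF A] unfolding T_def by blast
  then show ?thesis
  proof
    assume "T = L"
    have "A \<subseteq> fst_kernel K L"
    proof
      fix a assume a: "a \<in> A"
      then have "(a \<otimes>\<^bsub>H\<^esub> \<one>\<^bsub>H\<^esub>, \<one>\<^bsub>K\<^esub>) \<in> T" unfolding T_def using one_mem_L by blast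
      then show "a \<in> fst_kernel K L" unfolding fst_kernel_def using \<open>T = L\<close> a A_sub by auto
    qed
    then show ?thesis using kernel_A by blast
  next
    assume T: "T = carrier (H \<times>\<times> K)"
    have "h \<in> A" if h: "h \<in> carrier H" for h
    proof -
      have "(h, \<one>\<^bsub>K\<^esub>) \<in> T" using T h by simp
      then obtain a h' where a: "a \<in> A" and h': "(h', \<one>\<^bsub>K\<^esub>) \<in> L" and eq: "h = a \<otimes>\<^bsub>H\<^esub> h'"
        unfolding T_def by blast
      have "h' \<in> A" using h' kernel_A unfolding fst_kernel_def by blast
      then show "h \<in> A" using eq a normal_imp_subgroup[OF A] subgroup.m_closed by metis
    qed
    then show ?thesis using A_sub by blast
  qed
qed

lemma snd_kernel_proper: "snd_kernel H L \<noteq> carrier K"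
  using maximal_subdirect_product.fst_kernel_proper[OF maximal_subdirect_swap]
  by (simp add: snd_kernel_eq_fst_kernel_swap)

lemma snd_kernel_maximal_normal:
  "A \<lhd> K \<Longrightarrow> snd_kernel H L \<subseteq> A \<Longrightarrow> A = snd_kernel H L \<or> A = carrier K"
  using maximal_subdirect_product.fst_kernel_maximal_normal[OF maximal_subdirect_swap]
  by (simp add: snd_kernel_eq_fst_kernel_swap)

end

definition no_common_nonabelian_simple_quotient ::
    "('a, 'c) monoid_scheme \<Rightarrow> ('b, 'd) monoid_scheme \<Rightarrow> bool" where
  "no_common_nonabelian_simple_quotient H K \<longleftrightarrow>
     \<not> (\<exists>N M. N \<lhd> H \<and> M \<lhd> K \<and> simple_group (H Mod N) \<and>
              \<not> comm_group (H Mod N) \<and> (H Mod N) \<cong> (K Mod M))"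

lemma (in maximal_subdirect_product) maximal_subgroup_kernels:
  assumes fin: "finite (carrier H)" and no_common: "no_common_nonabelian_simple_quotient H K"
  shows "maximal_subgroup (fst_kernel K L) H" and "maximal_subgroup (snd_kernel H L) K"
proof -
  interpret N: normal "fst_kernel K L" H by (rule fst_kernel_normal)
  interpret N': normal "snd_kernel H L" K by (rule snd_kernel_normal)
  have "simple_group (H Mod fst_kernel K L)"
    by (rule N.simple_group_FactGroup[OF fin fst_kernel_proper fst_kernel_maximal_normal])
  then have comm: "comm_group (H Mod fst_kernel K L)"
    using no_common fst_kernel_normal snd_kernel_normal FactGroup_kernels_iso
    unfolding no_common_nonabelian_simple_quotient_def by blast
  then have comm': "comm_group (K Mod snd_kernel H L)"
    using comm_group.iso_imp_comm_group[OF comm FactGroup_kernels_iso]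
      group.is_monoid[OF N'.factorgroup_is_group]
    by blast
  show "maximal_subgroup (fst_kernel K L) H"
    by (rule N.maximal_subgroup_if_comm_FactGroup[OF comm fst_kernel_proper fst_kernel_maximal_normal])
  show "maximal_subgroup (snd_kernel H L) K"
    by (rule N'.maximal_subgroup_if_comm_FactGroup[OF comm' snd_kernel_proper snd_kernel_maximal_normal])
qed

section \<open>Additivity of MaxDim\<close>

lemma exists_standard_replacement:
  assumes H: "group H" and K: "group K" and fin: "finite (carrier H)"
    and no_common: "no_common_nonabelian_simple_quotient H K"
    and S: "S \<subseteq> {M. maximal_subgroup M (H \<times>\<times> K)}" "general_position (H \<times>\<times> K) S"
    and L: "L \<in> S" "\<not> standard_maximal H K L"
  obtains Z where "standard_maximal H K Z" "Z \<notin> S - {L}"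
    "general_position (H \<times>\<times> K) (insert Z (S - {L}))"
proof -
  have L_max: "maximal_subgroup L (H \<times>\<times> K)" using S(1) L(1) by blast
  moreover have "fst ` L = carrier H" "snd ` L = carrier K"
    using maximal_subgroup_DirProd_cases[OF H K L_max] L(2) by blast+
  ultimately interpret maximal_subdirect_product H K L
    by (intro maximal_subdirect_product.intro subdirect_product.intro subdirect_product_axioms.intro
        maximal_subdirect_product_axioms.intro H K maximal_subgroupD(1))
  obtain g where g: "g \<in> carrier (H \<times>\<times> K)" "\<forall>Y\<in>S - {L}. g \<in> Y" "g \<notin> L"
    using S(2) L(1) unfolding general_position_iff by blast
  have "g \<notin> fst_kernel K L \<times> carrier K \<or> g \<notin> carrier H \<times> snd_kernel H L"
    using g kernels_Times_subset by auto
  moreover have "fst_kernel K L \<times> carrier K \<lhd> H \<times>\<times> K"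
    by (rule H.DirProd_normal[OF K fst_kernel_normal K.normal_self])
  moreover have "carrier H \<times> snd_kernel H L \<lhd> H \<times>\<times> K"
    by (rule H.DirProd_normal[OF K H.normal_self snd_kernel_normal])
  moreover have "standard_maximal H K (fst_kernel K L \<times> carrier K)"
    and "standard_maximal H K (carrier H \<times> snd_kernel H L)"
    using maximal_subgroup_kernels[OF fin no_common] unfolding standard_maximal_def by blast+
  ultimately obtain Z where Z: "Z \<lhd> H \<times>\<times> K" "standard_maximal H K Z" "g \<notin> Z" by blast
  have "general_position (H \<times>\<times> K) (insert Z (S - {L}))"
  proof (rule general_position_insert_normal_maximal[OF DirProd_group[OF H K] _ _ Z(1) _ g(1,2) Z(3)])
    show "general_position (H \<times>\<times> K) (S - {L})" using S(2) by (rule general_position_subset) blast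
    show "subgroup U (H \<times>\<times> K)" if "U \<in> S - {L}" for U
      using that S(1) maximal_subgroupD(1) by blast
    show "maximal_subgroup Z (H \<times>\<times> K)"
      using standard_maximal_imp_maximal_subgroup[OF H K Z(2)] .
  qed
  moreover have "Z \<notin> S - {L}" using g(2) Z(3) by blast
  ultimately show ?thesis using that Z(2) by blast
qed

lemma card_le_MaxDim_add_if_standard:
  assumes H: "group H" "finite (carrier H)" and K: "group K" "finite (carrier K)"
    and S: "S \<subseteq> {M. maximal_subgroup M (H \<times>\<times> K)}" "general_position (H \<times>\<times> K) S"
    and standard: "\<forall>U\<in>S. standard_maximal H K U"
  shows "card S \<le> MaxDim H + MaxDim K"
proof -
  define S1 where "S1 = {M. maximal_subgroup M H \<and> M \<times> carrier K \<in> S}"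
  define S2 where "S2 = {M. maximal_subgroup M K \<and> carrier H \<times> M \<in> S}"
  have max1: "S1 \<subseteq> {M. maximal_subgroup M H}" and max2: "S2 \<subseteq> {M. maximal_subgroup M K}"
    unfolding S1_def S2_def by blast+
  then have sub1: "\<forall>M\<in>S1. M \<subseteq> carrier H" and sub2: "\<forall>M\<in>S2. M \<subseteq> carrier K"
    using maximal_subgroupD(1) subgroup.subset by blast+
  have ne: "carrier H \<noteq> {}" "carrier K \<noteq> {}"
    using H(1) K(1) group.is_monoid monoid.one_closed by blast+
  have "(\<lambda>M. M \<times> carrier K) ` S1 \<subseteq> S" "(\<lambda>M. carrier H \<times> M) ` S2 \<subseteq> S"
    unfolding S1_def S2_def by blast+
  then have gp1: "general_position H S1" and gp2: "general_position K S2"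
    using general_position_Times_carrier[OF ne(2) sub1] general_position_carrier_Times[OF ne(1) sub2]
      general_position_subset[OF S(2)]
    by blast+
  have fin: "finite S1" "finite S2" using gp1 gp2 unfolding general_position_def by blast+
  have "S \<subseteq> (\<lambda>M. M \<times> carrier K) ` S1 \<union> (\<lambda>M. carrier H \<times> M) ` S2"
  proof
    fix U assume "U \<in> S"
    then have "(\<exists>M. maximal_subgroup M H \<and> U = M \<times> carrier K) \<or>
        (\<exists>M. maximal_subgroup M K \<and> U = carrier H \<times> M)"
      using standard unfolding standard_maximal_def by blast
    then show "U \<in> (\<lambda>M. M \<times> carrier K) ` S1 \<union> (\<lambda>M. carrier H \<times> M) ` S2"
      unfolding S1_def S2_def using \<open>U \<in> S\<close> by blast
  qed
  then have "card S \<le> card ((\<lambda>M. M \<times> carrier K) ` S1 \<union> (\<lambda>M. carrier H \<times> M) ` S2)"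
    using fin by (intro card_mono) simp_all
  also have "\<dots> \<le> card ((\<lambda>M. M \<times> carrier K) ` S1) + card ((\<lambda>M. carrier H \<times> M) ` S2)"
    by (rule card_Un_le)
  also have "\<dots> \<le> card S1 + card S2" using fin by (intro add_mono card_image_le)
  also have "\<dots> \<le> MaxDim H + MaxDim K"
    using card_le_MaxDim[OF H(2) max1 gp1] card_le_MaxDim[OF K(2) max2 gp2] by (rule add_mono)
  finally show ?thesis .
qed

lemma card_le_MaxDim_add:
  assumes H: "group H" "finite (carrier H)" and K: "group K" "finite (carrier K)"
    and no_common: "no_common_nonabelian_simple_quotient H K"
  shows "S \<subseteq> {M. maximal_subgroup M (H \<times>\<times> K)} \<Longrightarrow> general_position (H \<times>\<times> K) S \<Longrightarrow>
    card S \<le> MaxDim H + MaxDim K"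
proof (induction "card {U\<in>S. \<not> standard_maximal H K U}" arbitrary: S rule: less_induct)
  case less
  show ?case
  proof (cases "\<forall>U\<in>S. standard_maximal H K U")
    case True
    then show ?thesis using card_le_MaxDim_add_if_standard[OF H K less.prems] by blast
  next
    case False
    then obtain L where L: "L \<in> S" "\<not> standard_maximal H K L" by blast
    obtain Z where Z: "standard_maximal H K Z" "Z \<notin> S - {L}"
      and gp: "general_position (H \<times>\<times> K) (insert Z (S - {L}))"
      using exists_standard_replacement[OF H(1) K(1) H(2) no_common less.prems L] by blast
    have "finite S" using less.prems(2) unfolding general_position_def by blast
    then have "card S = card (insert Z (S - {L}))"
      using Z(2) card_Suc_Diff1[OF _ L(1)] by (simp add: card_insert_disjoint)
    also have "\<dots> \<le> MaxDim H + MaxDim K"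
    proof (rule less.hyps)
      have "{U \<in> insert Z (S - {L}). \<not> standard_maximal H K U} =
          {U \<in> S. \<not> standard_maximal H K U} - {L}"
        using Z(1) by blast
      moreover have "card ({U \<in> S. \<not> standard_maximal H K U} - {L})
          < card {U \<in> S. \<not> standard_maximal H K U}"
        using \<open>finite S\<close> L by (intro card_Diff1_less) auto
      ultimately show "card {U \<in> insert Z (S - {L}). \<not> standard_maximal H K U}
          < card {U \<in> S. \<not> standard_maximal H K U}"
        by simp
      show "insert Z (S - {L}) \<subseteq> {M. maximal_subgroup M (H \<times>\<times> K)}"
        using less.prems(1) standard_maximal_imp_maximal_subgroup[OF H(1) K(1) Z(1)] by blast
    qed (rule gp)
    finally show ?thesis .
  qed
qed

lemma MaxDim_add_le_MaxDim_DirProd: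
  assumes H: "group H" "finite (carrier H)" and K: "group K" "finite (carrier K)"
  shows "MaxDim H + MaxDim K \<le> MaxDim (H \<times>\<times> K)"
proof -
  obtain S1 where S1: "S1 \<subseteq> {M. maximal_subgroup M H}" "general_position H S1" "card S1 = MaxDim H"
    using MaxDim_attained[OF H(2)] by blast
  obtain S2 where S2: "S2 \<subseteq> {M. maximal_subgroup M K}" "general_position K S2" "card S2 = MaxDim K"
    using MaxDim_attained[OF K(2)] by blast
  let ?T1 = "(\<lambda>M. M \<times> carrier K) ` S1" and ?T2 = "(\<lambda>M. carrier H \<times> M) ` S2"
  have one_H: "\<one>\<^bsub>H\<^esub> \<in> carrier H" and one_K: "\<one>\<^bsub>K\<^esub> \<in> carrier K"
    using H(1) K(1) group.is_monoid monoid.one_closed by blast+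
  have one1: "\<one>\<^bsub>H\<^esub> \<in> M" if "M \<in> S1" for M
    using that S1(1) maximal_subgroupD(1) subgroup.one_closed by blast
  have one2: "\<one>\<^bsub>K\<^esub> \<in> M" if "M \<in> S2" for M
    using that S2(1) maximal_subgroupD(1) subgroup.one_closed by blast
  have fin: "finite S1" "finite S2" using S1(2) S2(2) unfolding general_position_def by blast+
  have "?T1 \<inter> ?T2 = {}"
  proof (rule ccontr)
    assume "?T1 \<inter> ?T2 \<noteq> {}"
    then obtain M M' where "M \<in> S1" "M' \<in> S2" "M \<times> carrier K = carrier H \<times> M'" by blast
    then have "M = carrier H" using one1 one_K by (auto simp: times_eq_iff)
    then show False using \<open>M \<in> S1\<close> S1(1) maximal_subgroupD(2) by blast
  qed
  moreover have "inj_on (\<lambda>M. M \<times> carrier K) S1" "inj_on (\<lambda>M. carrier H \<times> M) S2"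
    using one_H one_K by (auto intro!: inj_onI simp: times_eq_iff)
  ultimately have "MaxDim H + MaxDim K = card (?T1 \<union> ?T2)"
    using fin S1(3) S2(3) by (simp add: card_Un_disjoint card_image)
  also have "\<dots> \<le> MaxDim (H \<times>\<times> K)"
  proof (rule card_le_MaxDim)
    show "finite (carrier (H \<times>\<times> K))" using H(2) K(2) by simp
    show "?T1 \<union> ?T2 \<subseteq> {M. maximal_subgroup M (H \<times>\<times> K)}"
      using S1(1) S2(1) maximal_subgroup_Times_carrier[OF H(1) K(1)]
        maximal_subgroup_carrier_Times_iff[OF H(1) K(1)]
      by blast
    show "general_position (H \<times>\<times> K) (?T1 \<union> ?T2)"
      by (rule general_position_DirProd_Un[OF S1(2) S2(2) one1 one2 one_H one_K])
  qed
  finally show ?thesis .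
qed

theorem theorem2p3:
  fixes H :: "('a, 'c) monoid_scheme" and K :: "('b, 'd) monoid_scheme"
  assumes "group H" and "finite (carrier H)"
      and "group K" and "finite (carrier K)"
      and "\<not> (\<exists>N M. N \<lhd> H \<and> M \<lhd> K \<and> simple_group (H Mod N) \<and>
                   \<not> comm_group (H Mod N) \<and> (H Mod N) \<cong> (K Mod M))"
  shows "MaxDim (H \<times>\<times> K) = MaxDim H + MaxDim K"
proof (rule antisym)
  have no_common: "no_common_nonabelian_simple_quotient H K"
    unfolding no_common_nonabelian_simple_quotient_def by (rule assms(5))
  obtain S where "S \<subseteq> {M. maximal_subgroup M (H \<times>\<times> K)}" "general_position (H \<times>\<times> K) S"
      "card S = MaxDim (H \<times>\<times> K)"
    using MaxDim_attained[of "H \<times>\<times> K"] assms(2,4) by auto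
  then show "MaxDim (H \<times>\<times> K) \<le> MaxDim H + MaxDim K"
    using card_le_MaxDim_add[OF assms(1,2,3,4) no_common] by metis
  show "MaxDim H + MaxDim K \<le> MaxDim (H \<times>\<times> K)"
    by (rule MaxDim_add_le_MaxDim_DirProd[OF assms(1-4)])
qed

end
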